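(* Let $f$ be a ternary cubic form such that $4\theta_{3311}\theta_{3322}-\theta_{3312}^2\neq0$. Then $f$ is completely reducible (a product of three linear forms) if and only if the following three equations hold: $$\Delta_{122}\theta_{3311}-\Delta_{112}\theta_{3312}+3\Delta_{111}\theta_{3322}=0,$$ $$3\Delta_{222}\theta_{3311}-\Delta_{122}\theta_{3312}+\Delta_{112}\theta_{3322}=0,$$ $$\Delta_{122}\theta_{1311}-\Delta_{112}\theta_{1312}+3\Delta_{111}\theta_{1322}+3\Delta_{222}\theta_{2311}-\Delta_{122}\theta_{2312}+\Delta_{112}\theta_{2322}-4\Delta_{223}\theta_{3311}+2\Delta_{123}\theta_{3312}-4\Delta_{113}\theta_{3322}=0.$$
   Context: Forms have complex coefficients in $x=(x_1,x_2,x_3)$; $u=(u_1,u_2,u_3)$ are indeterminates with $u_x=\sum u_ix_i$. The second transvectant is $J^2[f,g,h]=\big(\Omega^2(f(x)g(y)h(z))\big)|_{y=z=x}$, where $\Omega$ is the determinant of the operator matrix with rows $(\partial/\partial x_i)$, $(\partial/\partial y_i)$, $(\partial/\partial z_i)$, and $u$ is treated as constant. For a ternary cubic $f$, let $\Delta=\tfrac1{12}J^2[f,f,f]$ (the Hessian, equal to $\tfrac12\det(\partial^2f/\partial x_i\partial x_j)$), and write $\Delta_{ijk}$ ($i\le j\le k$) for its coefficient of $x_ix_jx_k$. Let $\theta=\tfrac14J^2[f,f,u_x^2]$, and write $\theta_{ijkl}$ ($i\le j$, $k\le l$) for its coefficient of $u_iu_jx_kx_l$. *)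

theory Defs
  imports "HOL-Analysis.Analysis" "HOL-Combinatorics.Permutations"
begin

text \<open>Points of C^3 are represented as functions nat => complex; only the
  coordinates 1, 2, 3 are used.\<close>

definition pd :: "nat \<Rightarrow> ((nat \<Rightarrow> complex) \<Rightarrow> complex) \<Rightarrow> (nat \<Rightarrow> complex) \<Rightarrow> complex" where
  "pd i g x = deriv (\<lambda>t. g (x(i := t))) (x i)"

definition pd2 :: "nat \<Rightarrow> nat \<Rightarrow> ((nat \<Rightarrow> complex) \<Rightarrow> complex) \<Rightarrow> (nat \<Rightarrow> complex) \<Rightarrow> complex" where
  "pd2 i j g = pd i (pd j g)"

text \<open>Second transvectant: Omega is the 3x3 operator determinant
  sum over sigma of sign sigma * d/dx_(sigma 1) d/dy_(sigma 2) d/dz_(sigma 3);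
  squaring, applying to f(x)g(y)h(z) and setting y = z = x gives the formula below.\<close>

definition J2 :: "((nat \<Rightarrow> complex) \<Rightarrow> complex) \<Rightarrow> ((nat \<Rightarrow> complex) \<Rightarrow> complex)
    \<Rightarrow> ((nat \<Rightarrow> complex) \<Rightarrow> complex) \<Rightarrow> (nat \<Rightarrow> complex) \<Rightarrow> complex" where
  "J2 f g h x = (\<Sum>\<sigma>\<in>{p. p permutes {1..3::nat}}. \<Sum>\<tau>\<in>{p. p permutes {1..3::nat}}.
      of_int (sign \<sigma> * sign \<tau>) * pd2 (\<sigma> 1) (\<tau> 1) f x * pd2 (\<sigma> 2) (\<tau> 2) g x
        * pd2 (\<sigma> 3) (\<tau> 3) h x)"

definition cubic_form :: "(nat \<Rightarrow> nat \<Rightarrow> nat \<Rightarrow> complex) \<Rightarrow> (nat \<Rightarrow> complex) \<Rightarrow> complex" where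
  "cubic_form a x = (\<Sum>i\<in>{1..3}. \<Sum>j\<in>{i..3}. \<Sum>k\<in>{j..3}. a i j k * x i * x j * x k)"

definition biquad_form :: "(nat \<Rightarrow> nat \<Rightarrow> nat \<Rightarrow> nat \<Rightarrow> complex) \<Rightarrow> (nat \<Rightarrow> complex) \<Rightarrow> (nat \<Rightarrow> complex) \<Rightarrow> complex" where
  "biquad_form b u x = (\<Sum>i\<in>{1..3}. \<Sum>j\<in>{i..3}. \<Sum>k\<in>{1..3}. \<Sum>l\<in>{k..3}.
      b i j k l * u i * u j * x k * x l)"

definition lin_form :: "(nat \<Rightarrow> complex) \<Rightarrow> (nat \<Rightarrow> complex) \<Rightarrow> complex" where
  "lin_form l x = (\<Sum>i\<in>{1..3}. l i * x i)"

definition completely_reducible :: "((nat \<Rightarrow> complex) \<Rightarrow> complex) \<Rightarrow> bool" where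
  "completely_reducible f \<longleftrightarrow>
     (\<exists>l1 l2 l3. \<forall>x. f x = lin_form l1 x * lin_form l2 x * lin_form l3 x)"

end

theory Submission
  imports Defs "HOL-Computational_Algebra.Fundamental_Theorem_Algebra"
begin

text \<open>The three conditions are
  linear in \<open>\<Delta>\<close> and hold identically when \<open>\<Delta>\<close> is replaced by \<open>f\<close> itself; since the Hessian of a
  product of three linear forms is the square of their determinant times the product, they hold
  for every completely reducible \<open>f\<close>. Conversely, \<open>4\<theta>\<^sub>3\<^sub>3\<^sub>1\<^sub>1\<theta>\<^sub>3\<^sub>3\<^sub>2\<^sub>2 - \<theta>\<^sub>3\<^sub>3\<^sub>1\<^sub>2\<^sup>2\<close> is
  48 times the discriminant of the binary cubic \<open>f(x\<^sub>1, x\<^sub>2, 0)\<close>, so this binary cubic splits into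
  three pairwise independent linear factors, and by interpolation at their zeros there is a
  product of linear forms agreeing with \<open>f\<close> modulo \<open>x\<^sub>3\<^sup>2\<close>. Once the other coefficients are fixed,
  the coefficients of \<open>x\<^sub>1x\<^sub>3\<^sup>2\<close>, \<open>x\<^sub>2x\<^sub>3\<^sup>2\<close> and \<open>x\<^sub>3\<^sup>3\<close> enter the three conditions linearly, with
  coefficients \<open>1\<close>, \<open>1\<close> and \<open>-6\<close> times \<open>4\<theta>\<^sub>3\<^sub>3\<^sub>1\<^sub>1\<theta>\<^sub>3\<^sub>3\<^sub>2\<^sub>2 - \<theta>\<^sub>3\<^sub>3\<^sub>1\<^sub>2\<^sup>2\<close>; so they are
  determined by the conditions, and \<open>f\<close> equals the product.\<close>

type_synonym cubic_coeffs = "nat \<Rightarrow> nat \<Rightarrow> nat \<Rightarrow> complex"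
type_synonym biquad_coeffs = "nat \<Rightarrow> nat \<Rightarrow> nat \<Rightarrow> nat \<Rightarrow> complex"

definition vec3 :: "complex \<Rightarrow> complex \<Rightarrow> complex \<Rightarrow> nat \<Rightarrow> complex" where
  "vec3 p q r n = (if n = 1 then p else if n = 2 then q else r)"

lemma vec3_simps [simp]: "vec3 p q r 1 = p" "vec3 p q r 2 = q" "vec3 p q r 3 = r"
  by (simp_all add: vec3_def)

lemma lin_form_expand: "lin_form u x = u 1 * x 1 + u 2 * x 2 + u 3 * x 3"
proof -
  have "{1..3::nat} = {1, 2, 3}" by auto
  then show ?thesis by (simp add: lin_form_def)
qed

definition quad_form :: "(nat \<Rightarrow> nat \<Rightarrow> complex) \<Rightarrow> (nat \<Rightarrow> complex) \<Rightarrow> complex" where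
  "quad_form c x = (\<Sum>i\<in>{1..3}. \<Sum>j\<in>{i..3}. c i j * x i * x j)"

lemma quad_form_expand: "quad_form c x =
  c 1 1 * x 1 * x 1 + c 1 2 * x 1 * x 2 + c 1 3 * x 1 * x 3
  + c 2 2 * x 2 * x 2 + c 2 3 * x 2 * x 3 + c 3 3 * x 3 * x 3"
proof -
  have "{1..3::nat} = {1, 2, 3}" "{2..3::nat} = {2, 3}" by auto
  then show ?thesis by (simp add: quad_form_def algebra_simps)
qed

lemma cubic_form_expand: "cubic_form a x =
  a 1 1 1 * x 1 * x 1 * x 1 + a 1 1 2 * x 1 * x 1 * x 2 + a 1 1 3 * x 1 * x 1 * x 3
  + a 1 2 2 * x 1 * x 2 * x 2 + a 1 2 3 * x 1 * x 2 * x 3 + a 1 3 3 * x 1 * x 3 * x 3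
  + a 2 2 2 * x 2 * x 2 * x 2 + a 2 2 3 * x 2 * x 2 * x 3 + a 2 3 3 * x 2 * x 3 * x 3
  + a 3 3 3 * x 3 * x 3 * x 3"
proof -
  have "{1..3::nat} = {1, 2, 3}" "{2..3::nat} = {2, 3}" by auto
  then show ?thesis by (simp add: cubic_form_def algebra_simps)
qed

lemma biquad_form_eq_quad_form:
  "biquad_form b u x = quad_form (\<lambda>k l. quad_form (\<lambda>i j. b i j k l) u) x"
proof -
  have "{1..3::nat} = {1, 2, 3}" "{2..3::nat} = {2, 3}" by auto
  then show ?thesis by (simp add: biquad_form_def quad_form_expand algebra_simps)
qed

lemma sorted_index_pair:
  assumes "1 \<le> i" "i \<le> j" "j \<le> (3::nat)"
    and "P 1 1" "P 1 2" "P 1 3" "P 2 2" "P 2 3" "P 3 3"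
  shows "P i j"
proof -
  have "i \<in> {1, 2, 3}" "j \<in> {1, 2, 3}"
    using assms(1-3) by auto
  then show ?thesis
    using assms by auto
qed

lemma sorted_index_triple:
  assumes "1 \<le> i" "i \<le> j" "j \<le> k" "k \<le> (3::nat)"
    and "P 1 1 1" "P 1 1 2" "P 1 1 3" "P 1 2 2" "P 1 2 3" "P 1 3 3" "P 2 2 2" "P 2 2 3" "P 2 3 3" "P 3 3 3"
  shows "P i j k"
proof -
  have "i \<in> {1, 2, 3}" "j \<in> {1, 2, 3}" "k \<in> {1, 2, 3}"
    using assms(1-4) by auto
  then show ?thesis
    using assms by auto
qed

lemma quad_form_coeff_eq:
  assumes eq: "quad_form A = quad_form B"
    and ij: "1 \<le> i" "i \<le> j" "j \<le> 3"
  shows "A i j = B i j"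
proof -
  have E: "quad_form A (vec3 p q r) = quad_form B (vec3 p q r)" for p q r
    using eq by simp
  note E = E[unfolded quad_form_expand vec3_simps]
  have 11: "A 1 1 = B 1 1" using E[of 1 0 0] by simp
  have 22: "A 2 2 = B 2 2" using E[of 0 1 0] by simp
  have 33: "A 3 3 = B 3 3" using E[of 0 0 1] by simp
  have 12: "A 1 2 = B 1 2" using E[of 1 1 0] 11 22 by simp
  have 13: "A 1 3 = B 1 3" using E[of 1 0 1] 11 33 by simp
  have 23: "A 2 3 = B 2 3" using E[of 0 1 1] 22 33 by simp
  show ?thesis
    using ij 11 12 13 22 23 33 by (rule sorted_index_pair)
qed

lemma cubic_form_coeff_eq:
  assumes eq: "cubic_form A = cubic_form B"
    and ijk: "1 \<le> i" "i \<le> j" "j \<le> k" "k \<le> 3"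
  shows "A i j k = B i j k"
proof -
  have E: "cubic_form A (vec3 p q r) = cubic_form B (vec3 p q r)" for p q r
    using eq by simp
  note E = E[unfolded cubic_form_expand vec3_simps]
  have 111: "A 1 1 1 = B 1 1 1" using E[of 1 0 0] by simp
  have 222: "A 2 2 2 = B 2 2 2" using E[of 0 1 0] by simp
  have 333: "A 3 3 3 = B 3 3 3" using E[of 0 0 1] by simp
  have 112: "A 1 1 2 = B 1 1 2" and 122: "A 1 2 2 = B 1 2 2"
    using E[of 1 1 0] E[of 1 "-1" 0] 111 222 by (simp_all add: algebra_simps; algebra)+
  have 113: "A 1 1 3 = B 1 1 3" and 133: "A 1 3 3 = B 1 3 3"
    using E[of 1 0 1] E[of 1 0 "-1"] 111 333 by (simp_all add: algebra_simps; algebra)+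
  have 223: "A 2 2 3 = B 2 2 3" and 233: "A 2 3 3 = B 2 3 3"
    using E[of 0 1 1] E[of 0 1 "-1"] 222 333 by (simp_all add: algebra_simps; algebra)+
  have 123: "A 1 2 3 = B 1 2 3"
    using E[of 1 1 1] 111 222 333 112 122 113 133 223 233 by simp
  show ?thesis
    using ijk 111 112 113 122 123 133 222 223 233 333 by (rule sorted_index_triple)
qed

lemma biquad_form_coeff_eq:
  assumes eq: "biquad_form A = biquad_form B"
    and ij: "1 \<le> i" "i \<le> j" "j \<le> 3" and kl: "1 \<le> k" "k \<le> l" "l \<le> 3"
  shows "A i j k l = B i j k l"
proof -
  have "quad_form (\<lambda>k l. quad_form (\<lambda>i j. A i j k l) u) = quad_form (\<lambda>k l. quad_form (\<lambda>i j. B i j k l) u)"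
    for u using eq by (simp add: fun_eq_iff biquad_form_eq_quad_form)
  then have "quad_form (\<lambda>i j. A i j k l) u = quad_form (\<lambda>i j. B i j k l) u" for u
    using quad_form_coeff_eq[OF _ kl] by blast
  then show ?thesis
    using quad_form_coeff_eq[OF _ ij, of "\<lambda>i j. A i j k l" "\<lambda>i j. B i j k l"] by blast
qed

definition cubic_gradient :: "cubic_coeffs \<Rightarrow> nat \<Rightarrow> (nat \<Rightarrow> complex) \<Rightarrow> complex" where
  "cubic_gradient a i x =
    (if i = 1 then 3*a 1 1 1*x 1*x 1 + 2*a 1 1 2*x 1*x 2 + 2*a 1 1 3*x 1*x 3 + a 1 2 2*x 2*x 2 + a 1 2 3*x 2*x 3 + a 1 3 3*x 3*x 3
     else if i = 2 then a 1 1 2*x 1*x 1 + 2*a 1 2 2*x 1*x 2 + a 1 2 3*x 1*x 3 + 3*a 2 2 2*x 2*x 2 + 2*a 2 2 3*x 2*x 3 + a 2 3 3*x 3*x 3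
     else a 1 1 3*x 1*x 1 + a 1 2 3*x 1*x 2 + 2*a 1 3 3*x 1*x 3 + a 2 2 3*x 2*x 2 + 2*a 2 3 3*x 2*x 3 + 3*a 3 3 3*x 3*x 3)"

definition cubic_hessian :: "cubic_coeffs \<Rightarrow> nat \<Rightarrow> nat \<Rightarrow> (nat \<Rightarrow> complex) \<Rightarrow> complex" where
  "cubic_hessian a i j x =
    (let ij = (min i j, max i j) in
     if ij = (1, 1) then 6*a 1 1 1*x 1 + 2*a 1 1 2*x 2 + 2*a 1 1 3*x 3
     else if ij = (1, 2) then 2*a 1 1 2*x 1 + 2*a 1 2 2*x 2 + a 1 2 3*x 3
     else if ij = (1, 3) then 2*a 1 1 3*x 1 + a 1 2 3*x 2 + 2*a 1 3 3*x 3
     else if ij = (2, 2) then 2*a 1 2 2*x 1 + 6*a 2 2 2*x 2 + 2*a 2 2 3*x 3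
     else if ij = (2, 3) then a 1 2 3*x 1 + 2*a 2 2 3*x 2 + 2*a 2 3 3*x 3
     else 2*a 1 3 3*x 1 + 2*a 2 3 3*x 2 + 6*a 3 3 3*x 3)"

lemma pd_cubic_form: "i \<in> {1, 2, 3} \<Longrightarrow> pd i (cubic_form a) x = cubic_gradient a i x"
  unfolding pd_def cubic_form_expand cubic_gradient_def
  by (elim insertE emptyE; simp; rule DERIV_imp_deriv;
      auto intro!: derivative_eq_intros simp: algebra_simps)

lemma pd_cubic_gradient:
  "i \<in> {1, 2, 3} \<Longrightarrow> j \<in> {1, 2, 3} \<Longrightarrow> pd i (cubic_gradient a j) x = cubic_hessian a i j x"
  unfolding pd_def cubic_hessian_def cubic_gradient_def Let_def
  by (elim insertE emptyE; simp; rule DERIV_imp_deriv;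
      auto intro!: derivative_eq_intros simp: algebra_simps)

lemma pd2_cubic_form:
  assumes "i \<in> {1, 2, 3}" "j \<in> {1, 2, 3}"
  shows "pd2 i j (cubic_form a) x = cubic_hessian a i j x"
proof -
  have "pd j (cubic_form a) = cubic_gradient a j"
    using pd_cubic_form[OF assms(2)] by (rule ext)
  then show ?thesis
    using pd_cubic_gradient[OF assms] by (simp add: pd2_def)
qed

lemma pd_lin_form_square:
  "j \<in> {1, 2, 3} \<Longrightarrow> pd j (\<lambda>y. (lin_form u y)\<^sup>2) x = 2 * u j * lin_form u x"
  unfolding pd_def lin_form_expand
  by (elim insertE emptyE; simp; rule DERIV_imp_deriv;
      auto intro!: derivative_eq_intros simp: algebra_simps)

lemma pd_scaled_lin_form:
  "i \<in> {1, 2, 3} \<Longrightarrow> pd i (\<lambda>y. c * lin_form u y) x = c * u i"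
  unfolding pd_def lin_form_expand
  by (elim insertE emptyE; simp; rule DERIV_imp_deriv;
      auto intro!: derivative_eq_intros simp: algebra_simps)

lemma pd2_lin_form_square:
  assumes "i \<in> {1, 2, 3}" "j \<in> {1, 2, 3}"
  shows "pd2 i j (\<lambda>y. (lin_form u y)\<^sup>2) x = 2 * u i * u j"
proof -
  have "pd j (\<lambda>y. (lin_form u y)\<^sup>2) = (\<lambda>y. 2 * u j * lin_form u y)"
    using pd_lin_form_square[OF assms(2)] by (rule ext)
  then show ?thesis
    using pd_scaled_lin_form[OF assms(1)] by (simp add: pd2_def)
qed

section \<open>The Hessian and the form \<open>\<theta>\<close>\<close>

definition alt3 :: "(nat \<Rightarrow> nat \<Rightarrow> nat \<Rightarrow> 'a::comm_ring_1) \<Rightarrow> 'a" where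
  "alt3 F = F 1 2 3 - F 2 1 3 - F 3 2 1 - F 1 3 2 + F 2 3 1 + F 3 1 2"

lemma sum_signed_permutations_3:
  "(\<Sum>\<sigma>\<in>{p. p permutes {1..3::nat}}. of_int (sign \<sigma>) * F (\<sigma> 1) (\<sigma> 2) (\<sigma> 3)) = alt3 F"
proof -
  have "{1..3::nat} = insert 1 (insert 2 {3})" by auto
  then show ?thesis
    by (simp add: alt3_def sum_over_permutations_insert sign_compose sign_swap_id
        permutation_swap_id Transposition.transpose_def algebra_simps)
qed

lemma J2_alt3:
  "J2 f g h x = alt3 (\<lambda>i j k. alt3 (\<lambda>i' j' k'. pd2 i i' f x * pd2 j j' g x * pd2 k k' h x))"
proof -
  let ?P = "{p. p permutes {1..3::nat}}"
  have "J2 f g h x = (\<Sum>\<sigma>\<in>?P. of_int (sign \<sigma>) * (\<Sum>\<tau>\<in>?P. of_int (sign \<tau>) *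
      (pd2 (\<sigma> 1) (\<tau> 1) f x * pd2 (\<sigma> 2) (\<tau> 2) g x * pd2 (\<sigma> 3) (\<tau> 3) h x)))"
    by (simp add: J2_def sum_distrib_left mult_ac)
  also have "\<dots> = (\<Sum>\<sigma>\<in>?P. of_int (sign \<sigma>) *
      alt3 (\<lambda>i' j' k'. pd2 (\<sigma> 1) i' f x * pd2 (\<sigma> 2) j' g x * pd2 (\<sigma> 3) k' h x))"
    by (intro sum.cong refl arg_cong[where f = "(*) _"] sum_signed_permutations_3)
  also have "\<dots> = alt3 (\<lambda>i j k. alt3 (\<lambda>i' j' k'. pd2 i i' f x * pd2 j j' g x * pd2 k k' h x))"
    by (rule sum_signed_permutations_3)
  finally show ?thesis .
qed

text \<open>The coefficients of \<open>\<Delta>\<close> and \<open>\<theta>\<close> as polynomials in those of \<open>f\<close>, obtained by expanding the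
  transvectants; \<open>J2_cubic_cubic_cubic\<close> and \<open>J2_cubic_cubic_square\<close> below verify them.\<close>

definition hessian_coeff :: "cubic_coeffs \<Rightarrow> cubic_coeffs" where
 "hessian_coeff a i j k = (if (i,j,k) = (1,1,1) then - 4 * (a 1 1 3) * (a 1 1 3) * (a 1 2 2) + 4 * (a 1 1 2) * (a 1 1 3) * (a 1 2 3) - 4 * (a 1 1 2) * (a 1 1 2) * (a 1 3 3) - 3 * (a 1 1 1) * (a 1 2 3) * (a 1 2 3) + 12 * (a 1 1 1) * (a 1 2 2) * (a 1 3 3)
  else if (i,j,k) = (1,1,2) then - 12 * (a 1 1 3) * (a 1 1 3) * (a 2 2 2) + (a 1 1 2) * (a 1 2 3) * (a 1 2 3) - 4 * (a 1 1 2) * (a 1 2 2) * (a 1 3 3) + 8 * (a 1 1 2) * (a 1 1 3) * (a 2 2 3) - 4 * (a 1 1 2) * (a 1 1 2) * (a 2 3 3) + 36 * (a 1 1 1) * (a 1 3 3) * (a 2 2 2) - 12 * (a 1 1 1) * (a 1 2 3) * (a 2 2 3) + 12 * (a 1 1 1) * (a 1 2 2) * (a 2 3 3)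
  else if (i,j,k) = (1,1,3) then (a 1 1 3) * (a 1 2 3) * (a 1 2 3) - 4 * (a 1 1 3) * (a 1 2 2) * (a 1 3 3) - 4 * (a 1 1 3) * (a 1 1 3) * (a 2 2 3) + 8 * (a 1 1 2) * (a 1 1 3) * (a 2 3 3) - 12 * (a 1 1 2) * (a 1 1 2) * (a 3 3 3) + 12 * (a 1 1 1) * (a 1 3 3) * (a 2 2 3) - 12 * (a 1 1 1) * (a 1 2 3) * (a 2 3 3) + 36 * (a 1 1 1) * (a 1 2 2) * (a 3 3 3)
  else if (i,j,k) = (1,2,2) then (a 1 2 2) * (a 1 2 3) * (a 1 2 3) - 4 * (a 1 2 2) * (a 1 2 2) * (a 1 3 3) - 12 * (a 1 1 3) * (a 1 2 3) * (a 2 2 2) + 8 * (a 1 1 3) * (a 1 2 2) * (a 2 2 3) + 12 * (a 1 1 2) * (a 1 3 3) * (a 2 2 2) - 4 * (a 1 1 2) * (a 1 2 2) * (a 2 3 3) - 12 * (a 1 1 1) * (a 2 2 3) * (a 2 2 3) + 36 * (a 1 1 1) * (a 2 2 2) * (a 2 3 3)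
  else if (i,j,k) = (1,2,3) then (a 1 2 3) * (a 1 2 3) * (a 1 2 3) - 4 * (a 1 2 2) * (a 1 2 3) * (a 1 3 3) - 12 * (a 1 1 3) * (a 1 3 3) * (a 2 2 2) - 4 * (a 1 1 3) * (a 1 2 3) * (a 2 2 3) + 12 * (a 1 1 3) * (a 1 2 2) * (a 2 3 3) + 12 * (a 1 1 2) * (a 1 3 3) * (a 2 2 3) - 4 * (a 1 1 2) * (a 1 2 3) * (a 2 3 3) - 12 * (a 1 1 2) * (a 1 2 2) * (a 3 3 3) - 12 * (a 1 1 1) * (a 2 2 3) * (a 2 3 3) + 108 * (a 1 1 1) * (a 2 2 2) * (a 3 3 3)
  else if (i,j,k) = (1,3,3) then (a 1 2 3) * (a 1 2 3) * (a 1 3 3) - 4 * (a 1 2 2) * (a 1 3 3) * (a 1 3 3) - 4 * (a 1 1 3) * (a 1 3 3) * (a 2 2 3) + 12 * (a 1 1 3) * (a 1 2 2) * (a 3 3 3) + 8 * (a 1 1 2) * (a 1 3 3) * (a 2 3 3) - 12 * (a 1 1 2) * (a 1 2 3) * (a 3 3 3) - 12 * (a 1 1 1) * (a 2 3 3) * (a 2 3 3) + 36 * (a 1 1 1) * (a 2 2 3) * (a 3 3 3)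
  else if (i,j,k) = (2,2,2) then - 3 * (a 1 2 3) * (a 1 2 3) * (a 2 2 2) + 4 * (a 1 2 2) * (a 1 2 3) * (a 2 2 3) - 4 * (a 1 2 2) * (a 1 2 2) * (a 2 3 3) - 4 * (a 1 1 2) * (a 2 2 3) * (a 2 2 3) + 12 * (a 1 1 2) * (a 2 2 2) * (a 2 3 3)
  else if (i,j,k) = (2,2,3) then - 12 * (a 1 2 3) * (a 1 3 3) * (a 2 2 2) + (a 1 2 3) * (a 1 2 3) * (a 2 2 3) + 8 * (a 1 2 2) * (a 1 3 3) * (a 2 2 3) - 12 * (a 1 2 2) * (a 1 2 2) * (a 3 3 3) - 4 * (a 1 1 3) * (a 2 2 3) * (a 2 2 3) + 12 * (a 1 1 3) * (a 2 2 2) * (a 2 3 3) - 4 * (a 1 1 2) * (a 2 2 3) * (a 2 3 3) + 36 * (a 1 1 2) * (a 2 2 2) * (a 3 3 3)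
  else if (i,j,k) = (2,3,3) then - 12 * (a 1 3 3) * (a 1 3 3) * (a 2 2 2) + (a 1 2 3) * (a 1 2 3) * (a 2 3 3) + 8 * (a 1 2 2) * (a 1 3 3) * (a 2 3 3) - 12 * (a 1 2 2) * (a 1 2 3) * (a 3 3 3) - 4 * (a 1 1 3) * (a 2 2 3) * (a 2 3 3) + 36 * (a 1 1 3) * (a 2 2 2) * (a 3 3 3) - 4 * (a 1 1 2) * (a 2 3 3) * (a 2 3 3) + 12 * (a 1 1 2) * (a 2 2 3) * (a 3 3 3)
  else if (i,j,k) = (3,3,3) then - 4 * (a 1 3 3) * (a 1 3 3) * (a 2 2 3) + 4 * (a 1 2 3) * (a 1 3 3) * (a 2 3 3) - 3 * (a 1 2 3) * (a 1 2 3) * (a 3 3 3) - 4 * (a 1 1 3) * (a 2 3 3) * (a 2 3 3) + 12 * (a 1 1 3) * (a 2 2 3) * (a 3 3 3)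
  else 0)"

definition theta_coeff :: "cubic_coeffs \<Rightarrow> biquad_coeffs" where
 "theta_coeff a i j k l = (if (i,j,k,l) = (1,1,1,1) then - (a 1 2 3) * (a 1 2 3) + 4 * (a 1 2 2) * (a 1 3 3)
  else if (i,j,k,l) = (1,1,1,2) then 12 * (a 1 3 3) * (a 2 2 2) - 4 * (a 1 2 3) * (a 2 2 3) + 4 * (a 1 2 2) * (a 2 3 3)
  else if (i,j,k,l) = (1,1,1,3) then 4 * (a 1 3 3) * (a 2 2 3) - 4 * (a 1 2 3) * (a 2 3 3) + 12 * (a 1 2 2) * (a 3 3 3)
  else if (i,j,k,l) = (1,1,2,2) then - 4 * (a 2 2 3) * (a 2 2 3) + 12 * (a 2 2 2) * (a 2 3 3)
  else if (i,j,k,l) = (1,1,2,3) then - 4 * (a 2 2 3) * (a 2 3 3) + 36 * (a 2 2 2) * (a 3 3 3)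
  else if (i,j,k,l) = (1,1,3,3) then - 4 * (a 2 3 3) * (a 2 3 3) + 12 * (a 2 2 3) * (a 3 3 3)
  else if (i,j,k,l) = (1,2,1,1) then 4 * (a 1 1 3) * (a 1 2 3) - 8 * (a 1 1 2) * (a 1 3 3)
  else if (i,j,k,l) = (1,2,1,2) then 2 * (a 1 2 3) * (a 1 2 3) - 8 * (a 1 2 2) * (a 1 3 3) + 8 * (a 1 1 3) * (a 2 2 3) - 8 * (a 1 1 2) * (a 2 3 3)
  else if (i,j,k,l) = (1,2,1,3) then 8 * (a 1 1 3) * (a 2 3 3) - 24 * (a 1 1 2) * (a 3 3 3)
  else if (i,j,k,l) = (1,2,2,2) then 4 * (a 1 2 3) * (a 2 2 3) - 8 * (a 1 2 2) * (a 2 3 3)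
  else if (i,j,k,l) = (1,2,2,3) then 8 * (a 1 3 3) * (a 2 2 3) - 24 * (a 1 2 2) * (a 3 3 3)
  else if (i,j,k,l) = (1,2,3,3) then 8 * (a 1 3 3) * (a 2 3 3) - 12 * (a 1 2 3) * (a 3 3 3)
  else if (i,j,k,l) = (1,3,1,1) then - 8 * (a 1 1 3) * (a 1 2 2) + 4 * (a 1 1 2) * (a 1 2 3)
  else if (i,j,k,l) = (1,3,1,2) then - 24 * (a 1 1 3) * (a 2 2 2) + 8 * (a 1 1 2) * (a 2 2 3)
  else if (i,j,k,l) = (1,3,1,3) then 2 * (a 1 2 3) * (a 1 2 3) - 8 * (a 1 2 2) * (a 1 3 3) - 8 * (a 1 1 3) * (a 2 2 3) + 8 * (a 1 1 2) * (a 2 3 3)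
  else if (i,j,k,l) = (1,3,2,2) then - 12 * (a 1 2 3) * (a 2 2 2) + 8 * (a 1 2 2) * (a 2 2 3)
  else if (i,j,k,l) = (1,3,2,3) then - 24 * (a 1 3 3) * (a 2 2 2) + 8 * (a 1 2 2) * (a 2 3 3)
  else if (i,j,k,l) = (1,3,3,3) then - 8 * (a 1 3 3) * (a 2 2 3) + 4 * (a 1 2 3) * (a 2 3 3)
  else if (i,j,k,l) = (2,2,1,1) then - 4 * (a 1 1 3) * (a 1 1 3) + 12 * (a 1 1 1) * (a 1 3 3)
  else if (i,j,k,l) = (2,2,1,2) then - 4 * (a 1 1 3) * (a 1 2 3) + 4 * (a 1 1 2) * (a 1 3 3) + 12 * (a 1 1 1) * (a 2 3 3)
  else if (i,j,k,l) = (2,2,1,3) then - 4 * (a 1 1 3) * (a 1 3 3) + 36 * (a 1 1 1) * (a 3 3 3)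
  else if (i,j,k,l) = (2,2,2,2) then - (a 1 2 3) * (a 1 2 3) + 4 * (a 1 1 2) * (a 2 3 3)
  else if (i,j,k,l) = (2,2,2,3) then - 4 * (a 1 2 3) * (a 1 3 3) + 4 * (a 1 1 3) * (a 2 3 3) + 12 * (a 1 1 2) * (a 3 3 3)
  else if (i,j,k,l) = (2,2,3,3) then - 4 * (a 1 3 3) * (a 1 3 3) + 12 * (a 1 1 3) * (a 3 3 3)
  else if (i,j,k,l) = (2,3,1,1) then 8 * (a 1 1 2) * (a 1 1 3) - 12 * (a 1 1 1) * (a 1 2 3)
  else if (i,j,k,l) = (2,3,1,2) then 8 * (a 1 1 3) * (a 1 2 2) - 24 * (a 1 1 1) * (a 2 2 3)
  else if (i,j,k,l) = (2,3,1,3) then 8 * (a 1 1 2) * (a 1 3 3) - 24 * (a 1 1 1) * (a 2 3 3)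
  else if (i,j,k,l) = (2,3,2,2) then 4 * (a 1 2 2) * (a 1 2 3) - 8 * (a 1 1 2) * (a 2 2 3)
  else if (i,j,k,l) = (2,3,2,3) then 2 * (a 1 2 3) * (a 1 2 3) + 8 * (a 1 2 2) * (a 1 3 3) - 8 * (a 1 1 3) * (a 2 2 3) - 8 * (a 1 1 2) * (a 2 3 3)
  else if (i,j,k,l) = (2,3,3,3) then 4 * (a 1 2 3) * (a 1 3 3) - 8 * (a 1 1 3) * (a 2 3 3)
  else if (i,j,k,l) = (3,3,1,1) then - 4 * (a 1 1 2) * (a 1 1 2) + 12 * (a 1 1 1) * (a 1 2 2)
  else if (i,j,k,l) = (3,3,1,2) then - 4 * (a 1 1 2) * (a 1 2 2) + 36 * (a 1 1 1) * (a 2 2 2)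
  else if (i,j,k,l) = (3,3,1,3) then 4 * (a 1 1 3) * (a 1 2 2) - 4 * (a 1 1 2) * (a 1 2 3) + 12 * (a 1 1 1) * (a 2 2 3)
  else if (i,j,k,l) = (3,3,2,2) then - 4 * (a 1 2 2) * (a 1 2 2) + 12 * (a 1 1 2) * (a 2 2 2)
  else if (i,j,k,l) = (3,3,2,3) then - 4 * (a 1 2 2) * (a 1 2 3) + 12 * (a 1 1 3) * (a 2 2 2) + 4 * (a 1 1 2) * (a 2 2 3)
  else if (i,j,k,l) = (3,3,3,3) then - (a 1 2 3) * (a 1 2 3) + 4 * (a 1 1 3) * (a 2 2 3)
  else 0)"

lemma J2_cubic_cubic_cubic:
  "J2 (cubic_form a) (cubic_form a) (cubic_form a) x = 12 * cubic_form (hessian_coeff a) x"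
  unfolding J2_alt3 alt3_def
  by (simp add: pd2_cubic_form cubic_hessian_def cubic_form_expand hessian_coeff_def) algebra

lemma J2_cubic_cubic_square:
  "J2 (cubic_form a) (cubic_form a) (\<lambda>y. (lin_form u y)\<^sup>2) x = 4 * biquad_form (theta_coeff a) u x"
  unfolding J2_alt3 alt3_def biquad_form_eq_quad_form quad_form_expand
  by (simp add: pd2_cubic_form pd2_lin_form_square cubic_hessian_def theta_coeff_def) algebra

lemma hessian_coeff_cong:
  assumes "cubic_form a = cubic_form b"
  shows "cubic_form (hessian_coeff a) = cubic_form (hessian_coeff b)"
proof
  fix x
  show "cubic_form (hessian_coeff a) x = cubic_form (hessian_coeff b) x"
    using J2_cubic_cubic_cubic[of a x] J2_cubic_cubic_cubic[of b x] assms by simp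
qed

lemma theta_coeff_cong:
  assumes "cubic_form a = cubic_form b"
  shows "biquad_form (theta_coeff a) = biquad_form (theta_coeff b)"
proof (intro ext)
  fix u x
  show "biquad_form (theta_coeff a) u x = biquad_form (theta_coeff b) u x"
    using J2_cubic_cubic_square[of a u x] J2_cubic_cubic_square[of b u x] assms by simp
qed

definition lin_prod_coeff :: "(nat \<Rightarrow> complex) \<Rightarrow> (nat \<Rightarrow> complex) \<Rightarrow> (nat \<Rightarrow> complex) \<Rightarrow> cubic_coeffs" where
 "lin_prod_coeff l1 l2 l3 i j k = (if (i,j,k) = (1,1,1) then l1 1 * l2 1 * l3 1
  else if (i,j,k) = (1,1,2) then l1 1 * l2 1 * l3 2 + l1 1 * l2 2 * l3 1 + l1 2 * l2 1 * l3 1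
  else if (i,j,k) = (1,1,3) then l1 1 * l2 1 * l3 3 + l1 1 * l2 3 * l3 1 + l1 3 * l2 1 * l3 1
  else if (i,j,k) = (1,2,2) then l1 1 * l2 2 * l3 2 + l1 2 * l2 1 * l3 2 + l1 2 * l2 2 * l3 1
  else if (i,j,k) = (1,2,3) then l1 1 * l2 2 * l3 3 + l1 1 * l2 3 * l3 2 + l1 2 * l2 1 * l3 3 + l1 2 * l2 3 * l3 1 + l1 3 * l2 1 * l3 2 + l1 3 * l2 2 * l3 1
  else if (i,j,k) = (1,3,3) then l1 1 * l2 3 * l3 3 + l1 3 * l2 1 * l3 3 + l1 3 * l2 3 * l3 1
  else if (i,j,k) = (2,2,2) then l1 2 * l2 2 * l3 2
  else if (i,j,k) = (2,2,3) then l1 2 * l2 2 * l3 3 + l1 2 * l2 3 * l3 2 + l1 3 * l2 2 * l3 2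
  else if (i,j,k) = (2,3,3) then l1 2 * l2 3 * l3 3 + l1 3 * l2 2 * l3 3 + l1 3 * l2 3 * l3 2
  else if (i,j,k) = (3,3,3) then l1 3 * l2 3 * l3 3
  else 0)"

lemma cubic_form_lin_prod_coeff:
  "cubic_form (lin_prod_coeff l1 l2 l3) x = lin_form l1 x * lin_form l2 x * lin_form l3 x"
  unfolding lin_form_expand cubic_form_expand lin_prod_coeff_def by simp algebra

definition det3 :: "(nat \<Rightarrow> complex) \<Rightarrow> (nat \<Rightarrow> complex) \<Rightarrow> (nat \<Rightarrow> complex) \<Rightarrow> complex" where
  "det3 l1 l2 l3 = l1 1 * (l2 2 * l3 3 - l2 3 * l3 2) - l1 2 * (l2 1 * l3 3 - l2 3 * l3 1)
    + l1 3 * (l2 1 * l3 2 - l2 2 * l3 1)"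

lemma hessian_coeff_lin_prod_coeff:
  assumes "1 \<le> i" "i \<le> j" "j \<le> k" "k \<le> 3"
  shows "hessian_coeff (lin_prod_coeff l1 l2 l3) i j k = (det3 l1 l2 l3)\<^sup>2 * lin_prod_coeff l1 l2 l3 i j k"
  using assms by (rule sorted_index_triple)
    (unfold hessian_coeff_def lin_prod_coeff_def det3_def, simp_all, algebra+)

definition reducibility_expr1 :: "cubic_coeffs \<Rightarrow> biquad_coeffs \<Rightarrow> complex" where
  "reducibility_expr1 D T = D 1 2 2 * T 3 3 1 1 - D 1 1 2 * T 3 3 1 2 + 3 * D 1 1 1 * T 3 3 2 2"

definition reducibility_expr2 :: "cubic_coeffs \<Rightarrow> biquad_coeffs \<Rightarrow> complex" where
  "reducibility_expr2 D T = 3 * D 2 2 2 * T 3 3 1 1 - D 1 2 2 * T 3 3 1 2 + D 1 1 2 * T 3 3 2 2"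

definition reducibility_expr3 :: "cubic_coeffs \<Rightarrow> biquad_coeffs \<Rightarrow> complex" where
  "reducibility_expr3 D T = D 1 2 2 * T 1 3 1 1 - D 1 1 2 * T 1 3 1 2 + 3 * D 1 1 1 * T 1 3 2 2
     + 3 * D 2 2 2 * T 2 3 1 1 - D 1 2 2 * T 2 3 1 2 + D 1 1 2 * T 2 3 2 2
     - 4 * D 2 2 3 * T 3 3 1 1 + 2 * D 1 2 3 * T 3 3 1 2 - 4 * D 1 1 3 * T 3 3 2 2"

definition reducibility_conditions :: "cubic_coeffs \<Rightarrow> biquad_coeffs \<Rightarrow> bool" where
  "reducibility_conditions D T \<longleftrightarrow>
     reducibility_expr1 D T = 0 \<and> reducibility_expr2 D T = 0 \<and> reducibility_expr3 D T = 0"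

definition theta_disc :: "biquad_coeffs \<Rightarrow> complex" where
  "theta_disc T = 4 * T 3 3 1 1 * T 3 3 2 2 - (T 3 3 1 2)\<^sup>2"

lemma reducibility_conditions_cong:
  assumes "cubic_form D = cubic_form D'" "biquad_form T = biquad_form T'"
  shows "reducibility_conditions D T \<longleftrightarrow> reducibility_conditions D' T'"
  by (simp add: reducibility_conditions_def reducibility_expr1_def reducibility_expr2_def
      reducibility_expr3_def cubic_form_coeff_eq[OF assms(1)] biquad_form_coeff_eq[OF assms(2)])

lemma theta_disc_cong:
  assumes "biquad_form T = biquad_form T'"
  shows "theta_disc T = theta_disc T'"
  by (simp add: theta_disc_def biquad_form_coeff_eq[OF assms])

lemma reducibility_exprs_self:
  "reducibility_expr1 a (theta_coeff a) = 0" "reducibility_expr2 a (theta_coeff a) = 0"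
  "reducibility_expr3 a (theta_coeff a) = 0"
  unfolding reducibility_expr1_def reducibility_expr2_def reducibility_expr3_def theta_coeff_def
  by (simp; algebra)+

lemma reducibility_conditions_lin_prod_coeff:
  fixes l1 l2 l3 :: "nat \<Rightarrow> complex"
  defines "b \<equiv> lin_prod_coeff l1 l2 l3"
  shows "reducibility_conditions (hessian_coeff b) (theta_coeff b)"
proof -
  let ?d = "(det3 l1 l2 l3)\<^sup>2"
  have "hessian_coeff b i j k = ?d * b i j k" if "1 \<le> i" "i \<le> j" "j \<le> k" "k \<le> 3" for i j k
    using hessian_coeff_lin_prod_coeff[OF that] by (simp add: b_def)
  then have "reducibility_expr1 (hessian_coeff b) T = ?d * reducibility_expr1 b T"
    "reducibility_expr2 (hessian_coeff b) T = ?d * reducibility_expr2 b T"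
    "reducibility_expr3 (hessian_coeff b) T = ?d * reducibility_expr3 b T" for T
    by (simp_all add: reducibility_expr1_def reducibility_expr2_def reducibility_expr3_def algebra_simps)
  then show ?thesis
    using reducibility_exprs_self[of b] by (simp add: reducibility_conditions_def)
qed

section \<open>Splitting binary forms\<close>

lemma binary_quadratic_form_splits:
  fixes A B C :: complex
  obtains p1 r1 p2 r2 where "A = p1 * p2" "B = p1 * r2 + r1 * p2" "C = r1 * r2"
proof (cases "A = 0")
  case True
  then have "A = 0 * B" "B = 0 * C + 1 * B" "C = 1 * C"
    by simp_all
  then show ?thesis
    by (rule that)
next
  case False
  define w where "w = csqrt (B\<^sup>2 - 4 * A * C)"
  have w: "w\<^sup>2 = B\<^sup>2 - 4 * A * C"
    by (simp add: w_def)
  show ?thesis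
  proof (rule that)
    show "A = A * 1" by simp
    show "B = A * ((B + w) / (2 * A)) + (B - w) / 2 * 1"
      using False by (simp add: field_simps)
    show "C = (B - w) / 2 * ((B + w) / (2 * A))"
      using False w by (simp add: field_simps) algebra
  qed
qed

lemma binary_cubic_form_splits:
  fixes c0 c1 c2 c3 :: complex
  obtains p1 r1 p2 r2 p3 r3 where "c0 = p1 * p2 * p3" "c1 = p1 * p2 * r3 + p1 * r2 * p3 + r1 * p2 * p3"
    "c2 = p1 * r2 * r3 + r1 * p2 * r3 + r1 * r2 * p3" "c3 = r1 * r2 * r3"
proof (cases "c0 = 0")
  case True
  obtain p1 r1 p2 r2 where "c1 = p1 * p2" "c2 = p1 * r2 + r1 * p2" "c3 = r1 * r2"
    by (rule binary_quadratic_form_splits)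
  with True have "c0 = p1 * p2 * 0" "c1 = p1 * p2 * 1 + p1 * r2 * 0 + r1 * p2 * 0"
    "c2 = p1 * r2 * 1 + r1 * p2 * 1 + r1 * r2 * 0" "c3 = r1 * r2 * 1"
    by simp_all
  then show ?thesis
    by (rule that)
next
  case False
  then have "\<not> constant (poly [:c3, c2, c1, c0:])"
    by (simp add: constant_degree)
  text \<open>A zero \<open>(z, 1)\<close> of the binary cubic yields the linear factor \<open>X - z Y\<close>.\<close>
  then obtain z where "poly [:c3, c2, c1, c0:] z = 0"
    using fundamental_theorem_of_algebra by blast
  then have z: "c3 = - (c2 * z + c1 * z\<^sup>2 + c0 * z ^ 3)"
    by (simp add: algebra_simps power2_eq_square power3_eq_cube) algebra
  obtain p1 r1 p2 r2 where q: "c0 = p1 * p2" "c1 + c0 * z = p1 * r2 + r1 * p2"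
    "c2 + c1 * z + c0 * z\<^sup>2 = r1 * r2"
    by (rule binary_quadratic_form_splits)
  have "c0 = p1 * p2 * 1" "c1 = p1 * p2 * (- z) + p1 * r2 * 1 + r1 * p2 * 1"
    "c2 = p1 * r2 * (- z) + r1 * p2 * (- z) + r1 * r2 * 1" "c3 = r1 * r2 * (- z)"
    using q z by (simp_all add: power2_eq_square power3_eq_cube; algebra)+
  then show ?thesis
    by (rule that)
qed

section \<open>Sufficiency of the conditions\<close>

definition agree_mod_x3_square :: "cubic_coeffs \<Rightarrow> cubic_coeffs \<Rightarrow> bool" where
  "agree_mod_x3_square a b \<longleftrightarrow>
     a 1 1 1 = b 1 1 1 \<and> a 1 1 2 = b 1 1 2 \<and> a 1 2 2 = b 1 2 2 \<and> a 2 2 2 = b 2 2 2 \<and>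
     a 1 1 3 = b 1 1 3 \<and> a 1 2 3 = b 1 2 3 \<and> a 2 2 3 = b 2 2 3"

lemma theta_disc_eq_discriminant:
  assumes "a 1 1 1 = p1 * p2 * p3" "a 1 1 2 = p1 * p2 * r3 + p1 * r2 * p3 + r1 * p2 * p3"
    "a 1 2 2 = p1 * r2 * r3 + r1 * p2 * r3 + r1 * r2 * p3" "a 2 2 2 = r1 * r2 * r3"
  shows "theta_disc (theta_coeff a) =
    48 * ((p1 * r2 - p2 * r1) * (p1 * r3 - p3 * r1) * (p2 * r3 - p3 * r2))\<^sup>2"
  unfolding theta_disc_def theta_coeff_def assms by simp algebra

lemma exists_lin_prod_agree_mod_x3_square:
  assumes disc: "theta_disc (theta_coeff a) \<noteq> 0"
  obtains l1 l2 l3 where "agree_mod_x3_square a (lin_prod_coeff l1 l2 l3)"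
proof -
  obtain p1 r1 p2 r2 p3 r3 where f: "a 1 1 1 = p1 * p2 * p3"
    "a 1 1 2 = p1 * p2 * r3 + p1 * r2 * p3 + r1 * p2 * p3"
    "a 1 2 2 = p1 * r2 * r3 + r1 * p2 * r3 + r1 * r2 * p3" "a 2 2 2 = r1 * r2 * r3"
    by (rule binary_cubic_form_splits)
  define d12 where "d12 = p1 * r2 - p2 * r1"
  define d13 where "d13 = p1 * r3 - p3 * r1"
  define d23 where "d23 = p2 * r3 - p3 * r2"
  have "theta_disc (theta_coeff a) = 48 * (d12 * d13 * d23)\<^sup>2"
    unfolding d12_def d13_def d23_def using f by (rule theta_disc_eq_discriminant)
  with disc have nz: "d12 \<noteq> 0" "d13 \<noteq> 0" "d23 \<noteq> 0"
    by auto
  text \<open>The \<open>x\<^sub>3\<close>-linear part of \<open>\<Prod>\<^sub>i (p\<^sub>i x\<^sub>1 + r\<^sub>i x\<^sub>2 + k\<^sub>i x\<^sub>3)\<close> at the zero \<open>(r\<^sub>i, -p\<^sub>i)\<close> of the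
    \<open>i\<close>-th binary factor is \<open>k\<^sub>i\<close> times the product of the other two factors; matching it with
    the \<open>x\<^sub>3\<close>-linear part \<open>h\<close> of \<open>f\<close> there determines \<open>k\<^sub>i\<close>.\<close>
  define h where "h X Y = a 1 1 3 * X\<^sup>2 + a 1 2 3 * X * Y + a 2 2 3 * Y\<^sup>2" for X Y
  define k1 where "k1 = h r1 (- p1) / (d12 * d13)"
  define k2 where "k2 = h r2 (- p2) / (- (d12 * d23))"
  define k3 where "k3 = h r3 (- p3) / (d13 * d23)"
  define b where "b = lin_prod_coeff (vec3 p1 r1 k1) (vec3 p2 r2 k2) (vec3 p3 r3 k3)"
  have k: "k1 * (d12 * d13) = h r1 (- p1)" "k2 * (- (d12 * d23)) = h r2 (- p2)"
    "k3 * (d13 * d23) = h r3 (- p3)"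
    using nz by (simp_all add: k1_def k2_def k3_def)
  have b: "b 1 1 1 = p1 * p2 * p3" "b 1 1 2 = p1 * p2 * r3 + p1 * r2 * p3 + r1 * p2 * p3"
    "b 1 2 2 = p1 * r2 * r3 + r1 * p2 * r3 + r1 * r2 * p3" "b 2 2 2 = r1 * r2 * r3"
    "b 1 1 3 = p1 * p2 * k3 + p1 * k2 * p3 + k1 * p2 * p3"
    "b 1 2 3 = p1 * r2 * k3 + p1 * k2 * r3 + r1 * p2 * k3 + r1 * k2 * p3 + k1 * p2 * r3 + k1 * r2 * p3"
    "b 2 2 3 = r1 * r2 * k3 + r1 * k2 * r3 + k1 * r2 * r3"
    by (simp_all add: b_def lin_prod_coeff_def algebra_simps del: One_nat_def)
  have "d12 * d13 * d23 * (a 1 1 3 - b 1 1 3) = 0" "d12 * d13 * d23 * (a 1 2 3 - b 1 2 3) = 0"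
    "d12 * d13 * d23 * (a 2 2 3 - b 2 2 3) = 0"
    using k unfolding b h_def d12_def d13_def d23_def by algebra+
  with nz have "a 1 1 3 = b 1 1 3" "a 1 2 3 = b 1 2 3" "a 2 2 3 = b 2 2 3"
    by simp_all
  then have "agree_mod_x3_square a b"
    unfolding agree_mod_x3_square_def b(1-4) f by (intro conjI refl)
  then show ?thesis
    unfolding b_def by (rule that)
qed

lemma reducibility_conditions_determine_cubic_form:
  assumes agree: "agree_mod_x3_square a b"
    and disc: "theta_disc (theta_coeff a) \<noteq> 0"
    and cond_a: "reducibility_conditions (hessian_coeff a) (theta_coeff a)"
    and cond_b: "reducibility_conditions (hessian_coeff b) (theta_coeff b)"
  shows "cubic_form a = cubic_form b"
proof -
  from agree have low: "a 1 1 1 = b 1 1 1" "a 1 1 2 = b 1 1 2" "a 1 2 2 = b 1 2 2" "a 2 2 2 = b 2 2 2"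
    "a 1 1 3 = b 1 1 3" "a 1 2 3 = b 1 2 3" "a 2 2 3 = b 2 2 3"
    by (simp_all add: agree_mod_x3_square_def)
  have "reducibility_expr1 (hessian_coeff a) (theta_coeff a) =
      reducibility_expr1 (hessian_coeff b) (theta_coeff b) + (a 1 3 3 - b 1 3 3) * theta_disc (theta_coeff a)"
    "reducibility_expr2 (hessian_coeff a) (theta_coeff a) =
      reducibility_expr2 (hessian_coeff b) (theta_coeff b) + (a 2 3 3 - b 2 3 3) * theta_disc (theta_coeff a)"
    unfolding reducibility_expr1_def reducibility_expr2_def theta_disc_def
      hessian_coeff_def theta_coeff_def low by simp_all algebra+
  with cond_a cond_b disc have 133: "a 1 3 3 = b 1 3 3" and 233: "a 2 3 3 = b 2 3 3"
    by (simp_all add: reducibility_conditions_def)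
  have "reducibility_expr3 (hessian_coeff a) (theta_coeff a) =
      reducibility_expr3 (hessian_coeff b) (theta_coeff b) - 6 * (a 3 3 3 - b 3 3 3) * theta_disc (theta_coeff a)"
    unfolding reducibility_expr3_def theta_disc_def hessian_coeff_def theta_coeff_def low 133 233
    by simp algebra
  with cond_a cond_b disc have "a 3 3 3 = b 3 3 3"
    by (simp add: reducibility_conditions_def)
  with low 133 233 show ?thesis
    by (simp add: fun_eq_iff cubic_form_expand)
qed

lemma completely_reducible_iff_reducibility_conditions:
  assumes disc: "theta_disc (theta_coeff a) \<noteq> 0"
  shows "completely_reducible (cubic_form a) \<longleftrightarrow>
    reducibility_conditions (hessian_coeff a) (theta_coeff a)"
proof
  assume "completely_reducible (cubic_form a)"
  then obtain l1 l2 l3 where "\<forall>x. cubic_form a x = lin_form l1 x * lin_form l2 x * lin_form l3 x"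
    unfolding completely_reducible_def by blast
  then have ab: "cubic_form a = cubic_form (lin_prod_coeff l1 l2 l3)"
    by (simp add: fun_eq_iff cubic_form_lin_prod_coeff)
  show "reducibility_conditions (hessian_coeff a) (theta_coeff a)"
    using reducibility_conditions_lin_prod_coeff[of l1 l2 l3]
      reducibility_conditions_cong[OF hessian_coeff_cong[OF ab] theta_coeff_cong[OF ab]] by simp
next
  assume cond: "reducibility_conditions (hessian_coeff a) (theta_coeff a)"
  obtain l1 l2 l3 where "agree_mod_x3_square a (lin_prod_coeff l1 l2 l3)"
    using exists_lin_prod_agree_mod_x3_square[OF disc] .
  then have "cubic_form a = cubic_form (lin_prod_coeff l1 l2 l3)"
    using disc cond reducibility_conditions_lin_prod_coeff
    by (rule reducibility_conditions_determine_cubic_form)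
  then show "completely_reducible (cubic_form a)"
    unfolding completely_reducible_def by (auto simp: cubic_form_lin_prod_coeff)
qed

theorem lemma9p1:
  fixes a D :: "nat \<Rightarrow> nat \<Rightarrow> nat \<Rightarrow> complex"
    and T :: "nat \<Rightarrow> nat \<Rightarrow> nat \<Rightarrow> nat \<Rightarrow> complex"
  assumes hD: "\<forall>x. (1/12) * J2 (cubic_form a) (cubic_form a) (cubic_form a) x = cubic_form D x"
    and hT: "\<forall>u x. (1/4) * J2 (cubic_form a) (cubic_form a) (\<lambda>y. (lin_form u y)\<^sup>2) x = biquad_form T u x"
    and nd: "4 * T 3 3 1 1 * T 3 3 2 2 - (T 3 3 1 2)\<^sup>2 \<noteq> 0"
  shows "completely_reducible (cubic_form a) \<longleftrightarrow>
    (D 1 2 2 * T 3 3 1 1 - D 1 1 2 * T 3 3 1 2 + 3 * D 1 1 1 * T 3 3 2 2 = 0 \<and>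
     3 * D 2 2 2 * T 3 3 1 1 - D 1 2 2 * T 3 3 1 2 + D 1 1 2 * T 3 3 2 2 = 0 \<and>
     D 1 2 2 * T 1 3 1 1 - D 1 1 2 * T 1 3 1 2 + 3 * D 1 1 1 * T 1 3 2 2
     + 3 * D 2 2 2 * T 2 3 1 1 - D 1 2 2 * T 2 3 1 2 + D 1 1 2 * T 2 3 2 2
     - 4 * D 2 2 3 * T 3 3 1 1 + 2 * D 1 2 3 * T 3 3 1 2 - 4 * D 1 1 3 * T 3 3 2 2 = 0)"
proof -
  have D: "cubic_form D = cubic_form (hessian_coeff a)"
    using hD by (simp add: fun_eq_iff J2_cubic_cubic_cubic)
  have T: "biquad_form T = biquad_form (theta_coeff a)"
    using hT by (simp add: fun_eq_iff J2_cubic_cubic_square)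
  from nd have "theta_disc (theta_coeff a) \<noteq> 0"
    unfolding theta_disc_cong[OF T, symmetric] unfolding theta_disc_def .
  then have "completely_reducible (cubic_form a) \<longleftrightarrow>
      reducibility_conditions (hessian_coeff a) (theta_coeff a)"
    by (rule completely_reducible_iff_reducibility_conditions)
  also have "\<dots> \<longleftrightarrow> reducibility_conditions D T"
    using reducibility_conditions_cong[OF D T] by simp
  finally show ?thesis
    unfolding reducibility_conditions_def reducibility_expr1_def reducibility_expr2_def
      reducibility_expr3_def .
qed

end
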